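(* Let $1\le M\le N$ be integers and let $i_1,\dots,i_N$, $j_1,\dots,j_N$, $k_1,\dots,k_M$, $l_1,\dots,l_M$ be mode indices. Then \begin{align*} &\langle\varphi_{i_1}\dots\varphi_{i_N}|\,a^\dagger_{k_1}\cdots a^\dagger_{k_M}a_{l_1}\cdots a_{l_M}\,|\varphi_{j_1}\dots\varphi_{j_N}\rangle\\ &=\frac{(N-M)!}{N!}(M!)^2\sum_{\substack{1\le\alpha_1<\dots<\alpha_M\le N\\ 1\le\beta_1<\dots<\beta_M\le N}}\delta_{k_1\dots k_M;\,i_{\alpha_1}\dots i_{\alpha_M}}\,\delta_{l_1\dots l_M;\,j_{\beta_1}\dots j_{\beta_M}}\,\delta_{\{i_1\dots i_N\}\setminus\{i_{\alpha_1}\dots i_{\alpha_M}\};\,\{j_1\dots j_N\}\setminus\{j_{\beta_1}\dots j_{\beta_M}\}} . \end{align*}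
   Context: Let $\{|\varphi_i\rangle\}$ be an orthonormal basis of a single-particle Hilbert space, and let $a_i,a_i^\dagger$ be the corresponding bosonic annihilation and creation operators on Fock space, satisfying $[a_i,a_j^\dagger]=\delta_{ij}$, $[a_i^\dagger,a_j^\dagger]=0$, $[a_i,a_j]=0$; $|0\rangle$ is the vacuum. Symmetrized $N$-particle states are $|\varphi_{i_1}\dots\varphi_{i_N}\rangle=\frac{1}{\sqrt{N!}}a_{i_1}^\dagger\cdots a_{i_N}^\dagger|0\rangle$. The permutation-invariant Kronecker delta of two index lists of equal length $L$ is $\delta_{i_1\dots i_L;j_1\dots j_L}:=\frac{1}{L!}\sum_{\sigma\in S_L}\prod_{k=1}^L\delta_{i_k j_{\sigma(k)}}$ (equal to $1$ for $L=0$). The list $\{i_1\dots i_N\}\setminus\{i_{\alpha_1}\dots i_{\alpha_M}\}$ is obtained from $i_1,\dots,i_N$ by removing the entries at positions $\alpha_1,\dots,\alpha_M$, and similarly for the $j$'s. *)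

theory Defs
  imports Complex_Main "HOL-Library.Multiset" "HOL-Combinatorics.Permutations"
begin

text \<open>Bosonic Fock space in the occupation-number representation: a vector is a
  complex-valued function on occupation configurations (multisets of mode labels);
  the basis vector of configuration n is the indicator of n.\<close>

type_synonym 'a fock = "'a multiset \<Rightarrow> complex"

definition fock_vacuum :: "'a fock" where
  "fock_vacuum = (\<lambda>m. if m = {#} then 1 else 0)"

text \<open>Creation operator: maps basis vector n to sqrt(n_i + 1) times basis vector n + i.\<close>
definition create :: "'a \<Rightarrow> 'a fock \<Rightarrow> 'a fock" where
  "create i v = (\<lambda>m. if i \<in># m then complex_of_real (sqrt (real (count m i))) * v (m - {#i#}) else 0)"

text \<open>Annihilation operator: maps basis vector n to sqrt(n_i) times basis vector n - i.\<close>
definition annih :: "'a \<Rightarrow> 'a fock \<Rightarrow> 'a fock" where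
  "annih i v = (\<lambda>m. complex_of_real (sqrt (real (count m i + 1))) * v (m + {#i#}))"

text \<open>Inner product (antilinear in the first argument); meaningful when u has finite support.\<close>
definition fock_inner :: "'a fock \<Rightarrow> 'a fock \<Rightarrow> complex" where
  "fock_inner u v = (\<Sum>m\<in>{m. u m \<noteq> 0}. cnj (u m) * v m)"

definition sym_state :: "'a list \<Rightarrow> 'a fock" where
  "sym_state xs = (\<lambda>m. complex_of_real (1 / sqrt (fact (length xs))) * foldr create xs fock_vacuum m)"

definition pdelta :: "'a list \<Rightarrow> 'a list \<Rightarrow> complex" where
  "pdelta xs ys = complex_of_real (1 / fact (length xs) *
     (\<Sum>\<sigma>\<in>{\<sigma>. \<sigma> permutes {..<length xs}}.
        \<Prod>k<length xs. (if xs ! k = ys ! (\<sigma> k) then 1 else 0)))"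

end

theory Submission
  imports Defs
begin

text \<open>Both sides are evaluated in closed form in terms of the occupation multisets
  \<open>n = mset iss\<close>, \<open>n' = mset jss\<close>, \<open>K = mset ks\<close>, \<open>L = mset ls\<close> and the weight
  \<open>w(X) = \<Prod>\<^sub>x count X x!\<close> (\<open>mset_fact\<close>). The symmetrized state of \<open>iss\<close> is \<open>\<surd>(w(n)/N!)\<close> times the basis
  vector of \<open>n\<close>, and strings of creation and annihilation operators map basis vectors to
  basis vectors with factors \<open>\<surd>\<close> of ratios of weights; hence the left-hand side is
  \<open>w(n) w(n') / (w(n' - L) N!)\<close> if \<open>L \<subseteq># n'\<close> and \<open>n = n' - L + K\<close>, and \<open>0\<close> otherwise.
  On the right, the permutations \<open>\<sigma>\<close> with \<open>xs ! k = ys ! \<sigma> k\<close> for all \<open>k\<close> are counted by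
  \<open>w(mset xs)\<close> when \<open>mset xs = mset ys\<close>, so every delta is an indicator times a weight.
  The double sum then factors through the number \<open>c(xs, K)\<close> of position sets picking the
  multiset \<open>K\<close> out of \<open>xs\<close>, and the multinomial identity
  \<open>c(xs, K) w(K) w(mset xs - K) = w(mset xs)\<close> (for \<open>K \<subseteq># mset xs\<close>) yields the same value.\<close>

section \<open>Multiset factorial weights\<close>

definition mset_fact :: "'a multiset \<Rightarrow> nat" where
  "mset_fact X = (\<Prod>x\<in>set_mset X. fact (count X x))"

lemma mset_fact_empty [simp]: "mset_fact {#} = 1"
  by (simp add: mset_fact_def)

lemma mset_fact_pos: "mset_fact X > 0"
  by (simp add: mset_fact_def)

lemma mset_fact_add_mset: "mset_fact (add_mset x X) = Suc (count X x) * mset_fact X"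
proof -
  have other: "(\<Prod>y\<in>set_mset X - {x}. fact (count (add_mset x X) y)) =
      (\<Prod>y\<in>set_mset X - {x}. fact (count X y))"
    by (rule prod.cong) auto
  have "mset_fact (add_mset x X) =
      fact (Suc (count X x)) * (\<Prod>y\<in>set_mset X - {x}. fact (count X y))"
    unfolding mset_fact_def other[symmetric]
    by (simp add: prod.insert_remove)
  also have "\<dots> = Suc (count X x) * mset_fact X"
    by (cases "x \<in># X") (simp_all add: mset_fact_def prod.remove not_in_iff algebra_simps)
  finally show ?thesis .
qed

lemma mset_fact_remove1:
  assumes "x \<in># X"
  shows "mset_fact X = count X x * mset_fact (X - {#x#})"
  using mset_fact_add_mset[of x "X - {#x#}"] assms
  by (simp add: insert_DiffM in_diff_count)

lemma add_mset_subset_eq_iff_in_diff: "add_mset x A \<subseteq># B \<longleftrightarrow> A \<subseteq># B \<and> x \<in># B - A"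
  by (metis add_mset_add_single mset_subset_eq_insertD single_subset_iff
      subset_mset.le_diff_conv2 subset_mset.strict_implies_order union_commute)

lemma add_mset_diff_subset_eq: "K \<subseteq># N \<Longrightarrow> add_mset x N - K = add_mset x (N - K)"
  by (rule multiset_eqI) (simp add: subseteq_mset_def Suc_diff_le)

lemma add_mset_diff_in: "x \<in># K \<Longrightarrow> add_mset x N - K = N - (K - {#x#})"
  using count_greater_zero_iff[of K x] by (intro multiset_eqI) auto

lemma remove1_subset_eq_iff: "x \<in># K \<Longrightarrow> K - {#x#} \<subseteq># N \<longleftrightarrow> K \<subseteq># add_mset x N"
  by (metis insert_DiffM mset_subset_eq_add_mset_cancel)

lemma count_eq_Suc_if_subset_eq_add_mset:
  assumes "K \<subseteq># add_mset x N" and "\<not> K \<subseteq># N"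
  shows "count K x = Suc (count N x)"
proof -
  obtain a where a: "count N a < count K a"
    using assms(2) by (auto simp add: subseteq_mset_def not_le)
  moreover have le: "count K b \<le> count (add_mset x N) b" for b
    using assms(1) by (rule mset_subset_eq_count)
  ultimately have "a = x"
    by (metis count_add_mset leD)
  with a show ?thesis
    using le[of x] by simp
qed

section \<open>Strings of creation and annihilation operators\<close>

definition fock_basis :: "'a multiset \<Rightarrow> complex \<Rightarrow> 'a fock" where
  "fock_basis q c = (\<lambda>m. if m = q then c else 0)"

lemma fock_vacuum_eq_fock_basis: "fock_vacuum = fock_basis {#} 1"
  by (simp add: fock_vacuum_def fock_basis_def)

lemma create_fock_basis:
  "create k (fock_basis q c) =
    fock_basis (add_mset k q) (of_real (sqrt (real (Suc (count q k)))) * c)"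
  by (rule ext) (auto simp add: create_def fock_basis_def)

lemma annih_fock_basis:
  "annih l (fock_basis q c) =
    (if l \<in># q then fock_basis (q - {#l#}) (of_real (sqrt (real (count q l))) * c) else (\<lambda>_. 0))"
proof (cases "l \<in># q")
  case True
  then have "add_mset l m = q \<longleftrightarrow> m = q - {#l#}" for m
    by auto
  with True show ?thesis
    by (auto simp add: annih_def fock_basis_def fun_eq_iff)
qed (auto simp add: annih_def fock_basis_def fun_eq_iff)

lemma create_zero [simp]: "create k (\<lambda>_. 0) = (\<lambda>_. 0)"
  by (simp add: create_def fun_eq_iff)

lemma annih_zero [simp]: "annih l (\<lambda>_. 0) = (\<lambda>_. 0)"
  by (simp add: annih_def)

lemma foldr_create_zero: "foldr create ks (\<lambda>_. 0) = (\<lambda>_. 0)"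
  by (induction ks) simp_all

lemma foldr_create_fock_basis:
  "foldr create ks (fock_basis q c) =
    fock_basis (q + mset ks)
      (of_real (sqrt (real (mset_fact (q + mset ks)) / real (mset_fact q))) * c)"
proof (induction ks)
  case Nil
  show ?case using mset_fact_pos[of q] by simp
next
  case (Cons k ks)
  have "sqrt (real (Suc (count (q + mset ks) k))) *
      sqrt (real (mset_fact (q + mset ks)) / real (mset_fact q)) =
    sqrt (real (mset_fact (q + mset (k # ks))) / real (mset_fact q))"
    by (simp add: mset_fact_add_mset real_sqrt_mult[symmetric] algebra_simps add_divide_distrib)
  then show ?case
    using Cons by (simp add: create_fock_basis mult.assoc[symmetric] of_real_mult[symmetric])
qed

lemma foldr_annih_fock_basis:
  "foldr annih ls (fock_basis q c) =
    (if mset ls \<subseteq># q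
     then fock_basis (q - mset ls)
       (of_real (sqrt (real (mset_fact q) / real (mset_fact (q - mset ls)))) * c)
     else (\<lambda>_. 0))"
proof (induction ls)
  case Nil
  show ?case using mset_fact_pos[of q] by simp
next
  case (Cons l ls)
  show ?case
  proof (cases "mset ls \<subseteq># q \<and> l \<in># q - mset ls")
    case True
    then have sub: "mset (l # ls) \<subseteq># q"
      by (simp add: add_mset_subset_eq_iff_in_diff)
    have "mset_fact (q - mset ls) = count (q - mset ls) l * mset_fact (q - mset (l # ls))"
      using mset_fact_remove1[of l "q - mset ls"] True by simp
    then have "sqrt (real (count (q - mset ls) l)) *
        sqrt (real (mset_fact q) / real (mset_fact (q - mset ls))) =
      sqrt (real (mset_fact q) / real (mset_fact (q - mset (l # ls))))"
      using True by (simp add: real_sqrt_mult[symmetric] in_diff_count)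
    with True sub show ?thesis
      using Cons by (simp add: annih_fock_basis mult.assoc[symmetric] of_real_mult[symmetric])
  next
    case False
    then have "\<not> mset (l # ls) \<subseteq># q"
      by (simp add: add_mset_subset_eq_iff_in_diff)
    with False show ?thesis
      using Cons by (auto simp add: annih_fock_basis)
  qed
qed

lemma sym_state_eq_fock_basis:
  "sym_state xs = fock_basis (mset xs)
    (of_real (sqrt (real (mset_fact (mset xs))) / sqrt (fact (length xs))))"
  unfolding sym_state_def fock_vacuum_eq_fock_basis foldr_create_fock_basis
  by (simp add: fock_basis_def fun_eq_iff)

lemma fock_inner_fock_basis:
  assumes "c \<noteq> 0"
  shows "fock_inner (fock_basis q c) v = cnj c * v q"
proof -
  have "{m. fock_basis q c m \<noteq> 0} = {q}"
    using assms by (auto simp add: fock_basis_def)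
  then show ?thesis
    by (simp add: fock_inner_def fock_basis_def)
qed

lemma fock_inner_sym_state_creates_annihs:
  assumes "length iss = N" and "length jss = N"
  shows "fock_inner (sym_state iss) (foldr create ks (foldr annih ls (sym_state jss))) =
    (if mset ls \<subseteq># mset jss \<and> mset iss = mset jss - mset ls + mset ks
     then of_real (real (mset_fact (mset iss)) * real (mset_fact (mset jss)) /
       (real (mset_fact (mset jss - mset ls)) * fact N))
     else 0)"
proof -
  define a b c where "a = real (mset_fact (mset iss))" and "b = real (mset_fact (mset jss))"
    and "c = real (mset_fact (mset jss - mset ls))"
  have pos: "a > 0" "b > 0" "c > 0"
    using mset_fact_pos unfolding a_def b_def c_def by simp_all
  have inner: "fock_inner (sym_state iss) v = of_real (sqrt a / sqrt (fact N)) * v (mset iss)"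
    for v :: "'a fock"
    using pos assms(1)
    by (simp add: sym_state_eq_fock_basis fock_inner_fock_basis a_def)
  show ?thesis
  proof (cases "mset ls \<subseteq># mset jss")
    case True
    let ?p = "mset jss - mset ls"
    have "foldr annih ls (sym_state jss) =
        fock_basis ?p (of_real (sqrt (b / c)) * of_real (sqrt b / sqrt (fact N)))"
      using True assms(2) by (simp add: sym_state_eq_fock_basis foldr_annih_fock_basis b_def c_def)
    then have F: "foldr create ks (foldr annih ls (sym_state jss)) =
        fock_basis (?p + mset ks) (of_real (sqrt (real (mset_fact (?p + mset ks)) / c)) *
          (of_real (sqrt (b / c)) * of_real (sqrt b / sqrt (fact N))))"
      by (simp add: foldr_create_fock_basis c_def)
    show ?thesis
    proof (cases "mset iss = ?p + mset ks")
      case eq: True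
      have "fock_inner (sym_state iss) (foldr create ks (foldr annih ls (sym_state jss))) =
          of_real (sqrt a / sqrt (fact N)) *
            (of_real (sqrt (a / c)) * (of_real (sqrt (b / c)) * of_real (sqrt b / sqrt (fact N))))"
        unfolding inner F using eq by (simp add: fock_basis_def a_def del: of_real_divide)
      also have "\<dots> = of_real (a * b / (c * fact N))"
        using pos by (simp only: of_real_mult[symmetric]) (simp add: real_sqrt_divide field_simps)
      finally show ?thesis
        using True eq by (simp add: a_def b_def c_def del: of_real_divide of_real_mult)
    qed (simp add: inner F fock_basis_def)
  next
    case False
    then show ?thesis
      by (simp add: inner sym_state_eq_fock_basis[of jss] foldr_annih_fock_basis foldr_create_zero)
  qed
qed

section \<open>The permutation-invariant delta\<close>

lemma image_mset_mset_set_permutes: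
  assumes "finite S" and "t permutes S"
  shows "image_mset (g \<circ> t) (mset_set S) = image_mset g (mset_set S)"
proof -
  have "image_mset t (mset_set S) = mset_set (t ` S)"
    using assms by (intro image_mset_mset_set) (auto dest: permutes_inj_on)
  then show ?thesis
    using assms(2) by (simp add: multiset.map_comp[symmetric] permutes_image)
qed

lemma count_image_mset_mset_set:
  assumes "finite S"
  shows "count (image_mset g (mset_set S)) x = card {s \<in> S. g s = x}"
  using assms by (simp add: count_image_mset Int_def conj_commute vimage_def)

lemma count_mult_mset_fact_remove1:
  "count G x * (if F = G - {#x#} then mset_fact F else 0) =
    (if add_mset x F = G then mset_fact (add_mset x F) else 0)"
proof (cases "add_mset x F = G")
  case True
  then show ?thesis by (auto simp add: mset_fact_add_mset)
next
  case False
  then have "x \<in># G \<Longrightarrow> F \<noteq> G - {#x#}"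
    by (auto simp add: insert_DiffM)
  with False show ?thesis
    by (cases "x \<in># G") (auto simp add: not_in_iff)
qed

lemma sum_permutes_prod_indicator:
  fixes L :: nat
  shows "(\<Sum>\<sigma>\<in>{\<sigma>. \<sigma> permutes {..<L}}. \<Prod>k<L. if f k = g (\<sigma> k) then 1 else 0 :: real) =
    (if image_mset f (mset_set {..<L}) = image_mset g (mset_set {..<L})
     then real (mset_fact (image_mset f (mset_set {..<L}))) else 0)"
proof (induction L arbitrary: g)
  case 0
  show ?case by simp
next
  case (Suc L)
  let ?F = "\<lambda>h. image_mset h (mset_set {..<L})"
  define G where "G = image_mset g (mset_set {..<Suc L})"
  define I where "I = (if ?F f = G - {#f L#} then real (mset_fact (?F f)) else 0)"
  have image_Suc: "image_mset h (mset_set {..<Suc L}) = add_mset (h L) (?F h)" for h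
    by (simp add: lessThan_Suc)
  have factor: "(\<Prod>k<Suc L. if f k = g ((transpose L b \<circ> q) k) then 1 else 0 :: real) =
      (if g b = f L then 1 else 0) *
      (\<Prod>k<L. if f k = (g \<circ> transpose L b) (q k) then 1 else 0)"
    if "q permutes {..<L}" for b q
  proof -
    have "q L = L"
      using that by (auto intro: permutes_not_in)
    then show ?thesis
      by (auto simp add: permutes_not_in)
  qed
  have inner: "(if g b = f L then 1 else 0) *
      (\<Sum>q\<in>{q. q permutes {..<L}}. \<Prod>k<L. if f k = (g \<circ> transpose L b) (q k) then 1 else 0) =
      (if g b = f L then I else 0)"
    if "b < Suc L" for b
  proof -
    have "transpose L b permutes {..<Suc L}"
      using that by (intro permutes_swap_id) auto
    then have "G = add_mset (g b) (?F (g \<circ> transpose L b))"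
      using image_mset_mset_set_permutes[of "{..<Suc L}" "transpose L b" g]
      by (simp add: G_def image_Suc)
    then have "?F (g \<circ> transpose L b) = G - {#g b#}"
      by simp
    then show ?thesis
      unfolding Suc.IH by (simp add: I_def)
  qed
  have "(\<Sum>\<sigma>\<in>{\<sigma>. \<sigma> permutes {..<Suc L}}. \<Prod>k<Suc L. if f k = g (\<sigma> k) then 1 else 0 :: real) =
      (\<Sum>b<Suc L. \<Sum>q\<in>{q. q permutes {..<L}}.
        \<Prod>k<Suc L. if f k = g ((transpose L b \<circ> q) k) then 1 else 0)"
    unfolding lessThan_Suc by (rule sum_over_permutations_insert) auto
  also have "\<dots> = (\<Sum>b<Suc L. (if g b = f L then 1 else 0) *
      (\<Sum>q\<in>{q. q permutes {..<L}}. \<Prod>k<L. if f k = (g \<circ> transpose L b) (q k) then 1 else 0))"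
    unfolding sum_distrib_left by (intro sum.cong refl, rule factor) simp
  also have "\<dots> = (\<Sum>b<Suc L. if g b = f L then I else 0)"
    by (rule sum.cong) (simp_all only: inner lessThan_iff)
  also have "\<dots> = real (count G (f L)) * I"
    by (simp add: sum.If_cases count_image_mset_mset_set G_def Int_def del: sum.lessThan_Suc)
  also have "\<dots> = (if image_mset f (mset_set {..<Suc L}) = G
      then real (mset_fact (image_mset f (mset_set {..<Suc L}))) else 0)"
    using arg_cong[OF count_mult_mset_fact_remove1[of G "f L" "?F f"], of real]
    unfolding image_Suc I_def by (simp only: of_nat_mult if_distrib[of real] of_nat_0)
  finally show ?case
    by (simp add: G_def)
qed

lemma image_mset_nth_mset_set: "image_mset (nth xs) (mset_set {..<length xs}) = mset xs"
proof -
  have "mset xs = mset (map (nth xs) [0..<length xs])"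
    by (simp add: map_nth)
  then show ?thesis
    by (simp add: atLeast0LessThan)
qed

lemma pdelta_eq_mset:
  assumes "length ys = length xs"
  shows "pdelta xs ys =
    (if mset xs = mset ys then of_real (real (mset_fact (mset xs)) / fact (length xs)) else 0)"
  using sum_permutes_prod_indicator[where L = "length xs" and f = "nth xs" and g = "nth ys"]
    image_mset_nth_mset_set[of ys] assms
  by (simp add: pdelta_def image_mset_nth_mset_set)

section \<open>Counting position sets\<close>

lemma nths_inter_lessThan: "nths xs (A \<inter> {..<length xs}) = nths xs A"
proof (induction xs arbitrary: A)
  case (Cons x xs)
  have "{j. Suc j \<in> A \<inter> {..<length (x # xs)}} = {j. Suc j \<in> A} \<inter> {..<length xs}"
    by auto
  then show ?case
    using Cons.IH[of "{j. Suc j \<in> A}"] by (simp add: nths_Cons)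
qed simp

lemma mset_nths_add_mset_nths_Compl: "mset (nths xs A) + mset (nths xs (- A)) = mset xs"
  by (induction xs rule: rev_induct) (auto simp add: nths_append)

lemma mset_nths_subset_eq: "mset (nths xs A) \<subseteq># mset xs"
  using mset_nths_add_mset_nths_Compl[of xs A] by (metis mset_subset_eq_add_left)

lemma mset_nths_Diff: "mset (nths xs ({..<length xs} - A)) = mset xs - mset (nths xs A)"
proof -
  have "nths xs ({..<length xs} - A) = nths xs (- A)"
    by (metis nths_inter_lessThan Diff_eq inf_commute)
  then show ?thesis
    using mset_nths_add_mset_nths_Compl[of xs A] by (metis add_diff_cancel_left')
qed

lemma length_nths_subset:
  assumes "A \<subseteq> {..<length xs}"
  shows "length (nths xs A) = card A"
proof -
  have "{i. i < length xs \<and> i \<in> A} = A"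
    using assms by auto
  then show ?thesis
    by (simp add: length_nths)
qed

lemma card_subsets_insert:
  assumes "finite S" and "a \<notin> S"
  shows "card {A. A \<subseteq> insert a S \<and> P A} =
    card {A. A \<subseteq> S \<and> P A} + card {A. A \<subseteq> S \<and> P (insert a A)}"
proof -
  let ?T = "{A. A \<subseteq> S \<and> P (insert a A)}"
  have "{A. A \<subseteq> insert a S \<and> P A} = {A. A \<subseteq> S \<and> P A} \<union> insert a ` ?T"
  proof (intro equalityI subsetI)
    fix A
    assume A: "A \<in> {A. A \<subseteq> insert a S \<and> P A}"
    show "A \<in> {A. A \<subseteq> S \<and> P A} \<union> insert a ` ?T"
    proof (cases "a \<in> A")
      case True
      then have "A = insert a (A - {a})" and "A - {a} \<in> ?T"
        using A by (auto simp add: insert_absorb)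
      then show ?thesis
        by blast
    qed (use A in auto)
  qed auto
  moreover have "inj_on (insert a) ?T"
  proof (rule inj_onI)
    fix A B
    assume "A \<in> ?T" "B \<in> ?T" "insert a A = insert a B"
    moreover from \<open>A \<in> ?T\<close> \<open>B \<in> ?T\<close> have "a \<notin> A" "a \<notin> B"
      using assms(2) by auto
    ultimately show "A = B"
      by (metis Diff_insert_absorb)
  qed
  moreover have "finite {A. A \<subseteq> S \<and> P A}" "finite ?T"
    using assms(1) by simp_all
  moreover have "{A. A \<subseteq> S \<and> P A} \<inter> insert a ` ?T = {}"
    using assms(2) by auto
  ultimately show ?thesis
    by (simp add: card_Un_disjoint card_image)
qed

definition subseq_count :: "'a list \<Rightarrow> 'a multiset \<Rightarrow> nat" where
  "subseq_count xs K = card {A. A \<subseteq> {..<length xs} \<and> mset (nths xs A) = K}"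

lemma subseq_count_Nil: "subseq_count [] K = (if K = {#} then 1 else 0)"
proof -
  have "{A. A \<subseteq> {} \<and> mset (nths [] A) = K} = (if K = {#} then {{}} else {})"
    by auto
  then show ?thesis
    by (simp add: subseq_count_def)
qed

lemma subseq_count_eq_0: "\<not> K \<subseteq># mset xs \<Longrightarrow> subseq_count xs K = 0"
  using mset_nths_subset_eq[of xs] by (auto simp add: subseq_count_def)

lemma subseq_count_snoc:
  "subseq_count (xs @ [x]) K =
    subseq_count xs K + (if x \<in># K then subseq_count xs (K - {#x#}) else 0)"
proof -
  let ?n = "length xs"
  have nths_snoc: "nths (xs @ [x]) A = nths xs A"
    and nths_snoc_insert: "nths (xs @ [x]) (insert ?n A) = nths xs A @ [x]"
    if "A \<subseteq> {..<?n}" for A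
  proof -
    have "insert ?n A \<inter> {..<?n} = A \<inter> {..<?n}"
      by auto
    then have "nths xs (insert ?n A) = nths xs A"
      by (metis nths_inter_lessThan)
    with that show "nths (xs @ [x]) A = nths xs A" "nths (xs @ [x]) (insert ?n A) = nths xs A @ [x]"
      by (auto simp add: nths_append)
  qed
  have "subseq_count (xs @ [x]) K = card {A. A \<subseteq> {..<?n} \<and> mset (nths xs A) = K} +
      card {A. A \<subseteq> {..<?n} \<and> add_mset x (mset (nths xs A)) = K}"
    using card_subsets_insert[of "{..<?n}" ?n "\<lambda>A. mset (nths (xs @ [x]) A) = K"]
    by (simp add: subseq_count_def lessThan_Suc nths_snoc nths_snoc_insert cong: conj_cong)
  moreover have "add_mset x M = K \<longleftrightarrow> x \<in># K \<and> M = K - {#x#}" for M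
    by auto
  ultimately show ?thesis
    by (simp add: subseq_count_def)
qed

lemma subseq_count_mult_mset_fact:
  "subseq_count xs K * mset_fact K * mset_fact (mset xs - K) =
    (if K \<subseteq># mset xs then mset_fact (mset xs) else 0)"
proof (induction xs arbitrary: K rule: rev_induct)
  case Nil
  show ?case by (simp add: subseq_count_Nil)
next
  case (snoc x xs)
  let ?N = "mset xs"
  let ?c = "count ?N x" and ?k = "count K x"
  have without_x: "subseq_count xs K * mset_fact K * mset_fact (add_mset x ?N - K) =
      (if K \<subseteq># add_mset x ?N then (Suc ?c - ?k) * mset_fact ?N else 0)"
  proof (cases "K \<subseteq># ?N")
    case True
    then have "?k \<le> ?c" and "K \<subseteq># add_mset x ?N"
      by (auto simp add: subseteq_mset_def le_SucI)
    moreover have "subseq_count xs K * mset_fact K * mset_fact (add_mset x ?N - K) =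
        Suc (?c - ?k) * (subseq_count xs K * mset_fact K * mset_fact (?N - K))"
      by (simp add: add_mset_diff_subset_eq[OF True] mset_fact_add_mset algebra_simps)
    ultimately show ?thesis
      using True snoc.IH[of K] by (simp add: Suc_diff_le)
  next
    case False
    then show ?thesis
      by (simp add: subseq_count_eq_0 count_eq_Suc_if_subset_eq_add_mset)
  qed
  have with_x: "(if x \<in># K then subseq_count xs (K - {#x#}) else 0) * mset_fact K *
      mset_fact (add_mset x ?N - K) =
      (if K \<subseteq># add_mset x ?N then ?k * mset_fact ?N else 0)"
  proof (cases "x \<in># K")
    case True
    have "subseq_count xs (K - {#x#}) * mset_fact K * mset_fact (add_mset x ?N - K) =
        ?k * (subseq_count xs (K - {#x#}) * mset_fact (K - {#x#}) * mset_fact (?N - (K - {#x#})))"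
      using True by (simp add: mset_fact_remove1[OF True] add_mset_diff_in)
    with True show ?thesis
      by (simp add: snoc.IH remove1_subset_eq_iff)
  next
    case False
    then show ?thesis
      by (simp add: count_eq_zero_iff)
  qed
  have "subseq_count (xs @ [x]) K * mset_fact K * mset_fact (mset (xs @ [x]) - K) =
      (if K \<subseteq># add_mset x ?N then (Suc ?c - ?k) * mset_fact ?N else 0) +
      (if K \<subseteq># add_mset x ?N then ?k * mset_fact ?N else 0)"
    unfolding without_x[symmetric] with_x[symmetric] by (simp add: subseq_count_snoc add_mult_distrib)
  also have "\<dots> = (if K \<subseteq># mset (xs @ [x]) then mset_fact (mset (xs @ [x])) else 0)"
    using mset_subset_eq_count[of K "add_mset x ?N" x]
    by (simp add: mset_fact_add_mset add_mult_distrib[symmetric])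
  finally show ?case .
qed

section \<open>The double sum over position sets\<close>

lemma sum_subsets_nths_indicator:
  assumes "length xs = N" and "size K = M"
  shows "(\<Sum>A\<in>{A. A \<subseteq> {..<N} \<and> card A = M}. if mset (nths xs A) = K then 1 else 0 :: real) =
    real (subseq_count xs K)"
proof -
  have "{A. A \<subseteq> {..<N} \<and> card A = M \<and> mset (nths xs A) = K} =
      {A. A \<subseteq> {..<length xs} \<and> mset (nths xs A) = K}"
    using assms length_nths_subset[of _ xs] by (metis size_mset)
  then show ?thesis
    by (simp add: sum.If_cases Int_def subseq_count_def conj_assoc)
qed

lemma sum_pdelta_nths:
  assumes "M \<le> N" and "length iss = N" and "length jss = N"
    and "length ks = M" and "length ls = M"
  shows "(\<Sum>A\<in>{A. A \<subseteq> {..<N} \<and> card A = M}. \<Sum>B\<in>{B. B \<subseteq> {..<N} \<and> card B = M}.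
      pdelta ks (nths iss A) * pdelta ls (nths jss B) *
      pdelta (nths iss ({..<N} - A)) (nths jss ({..<N} - B))) =
    of_real (real (subseq_count iss (mset ks)) * real (subseq_count jss (mset ls)) *
      (real (mset_fact (mset ks)) / fact M * (real (mset_fact (mset ls)) / fact M) *
       (if mset iss - mset ks = mset jss - mset ls
        then real (mset_fact (mset iss - mset ks)) / fact (N - M) else 0)))"
    (is "(\<Sum>A\<in>?S. \<Sum>B\<in>?S. ?term A B) = of_real (_ * _ * ?Q)")
proof -
  let ?ind = "\<lambda>xs A K. if mset (nths xs A) = K then 1 else 0 :: real"
  have summand: "?term A B = of_real (?ind iss A (mset ks) * ?ind jss B (mset ls) * ?Q)"
    if "A \<in> ?S" and "B \<in> ?S" for A B
  proof -
    have "finite A" "finite B"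
      using that finite_subset by blast+
    with that have "length (nths iss A) = M" "length (nths jss B) = M"
      and "length (nths iss ({..<N} - A)) = N - M" "length (nths jss ({..<N} - B)) = N - M"
      using assms by (auto simp add: length_nths_subset card_Diff_subset)
    moreover have "mset (nths iss ({..<N} - A)) = mset iss - mset (nths iss A)"
      and "mset (nths jss ({..<N} - B)) = mset jss - mset (nths jss B)"
      using assms mset_nths_Diff by metis+
    ultimately show ?thesis
      using assms by (auto simp add: pdelta_eq_mset)
  qed
  have "(\<Sum>A\<in>?S. \<Sum>B\<in>?S. ?term A B) =
      of_real (\<Sum>A\<in>?S. \<Sum>B\<in>?S. ?ind iss A (mset ks) * ?ind jss B (mset ls) * ?Q)"
    by (simp only: summand of_real_sum cong: sum.cong)
  also have "\<dots> = of_real ((\<Sum>A\<in>?S. ?ind iss A (mset ks)) * (\<Sum>B\<in>?S. ?ind jss B (mset ls)) * ?Q)"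
    by (subst sum_product) (simp only: sum_distrib_right)
  finally show ?thesis
    using assms by (simp only: sum_subsets_nths_indicator size_mset)
qed

lemma scaled_subseq_count_product:
  fixes iss jss :: "'a list" and K L :: "'a multiset"
  defines "n \<equiv> mset iss" and "n' \<equiv> mset jss"
  shows "fact (N - M) / fact N * (fact M)^2 *
      (real (subseq_count iss K) * real (subseq_count jss L) *
       (real (mset_fact K) / fact M * (real (mset_fact L) / fact M) *
        (if n - K = n' - L then real (mset_fact (n - K)) / fact (N - M) else 0))) =
    (if L \<subseteq># n' \<and> n = n' - L + K
     then real (mset_fact n) * real (mset_fact n') / (real (mset_fact (n' - L)) * fact N) else 0)"
proof (cases "n - K = n' - L")
  case True
  define ci cj where "ci = real (subseq_count iss K)" and "cj = real (subseq_count jss L)"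
  have ci: "ci * real (mset_fact K) * real (mset_fact (n - K)) =
      (if K \<subseteq># n then real (mset_fact n) else 0)"
    using subseq_count_mult_mset_fact[of iss K] unfolding ci_def n_def
    by (metis (mono_tags) of_nat_0 of_nat_mult)
  have cj: "cj * real (mset_fact L) * real (mset_fact (n' - L)) =
      (if L \<subseteq># n' then real (mset_fact n') else 0)"
    using subseq_count_mult_mset_fact[of jss L] unfolding cj_def n'_def
    by (metis (mono_tags) of_nat_0 of_nat_mult)
  have iff: "K \<subseteq># n \<and> L \<subseteq># n' \<longleftrightarrow> L \<subseteq># n' \<and> n = n' - L + K"
    using True by (metis subset_mset.diff_add mset_subset_eq_add_right)
  have "fact (N - M) / fact N * (fact M)^2 * (ci * cj *
      (real (mset_fact K) / fact M * (real (mset_fact L) / fact M) *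
       (real (mset_fact (n - K)) / fact (N - M)))) =
    (ci * real (mset_fact K) * real (mset_fact (n - K))) *
    (cj * real (mset_fact L) * real (mset_fact (n' - L))) / (real (mset_fact (n' - L)) * fact N)"
    using True mset_fact_pos[of "n' - L"] by (simp add: field_simps power2_eq_square)
  also have "\<dots> = (if K \<subseteq># n then real (mset_fact n) else 0) *
      (if L \<subseteq># n' then real (mset_fact n') else 0) / (real (mset_fact (n' - L)) * fact N)"
    by (simp only: ci cj)
  finally show ?thesis
    using True iff by (simp add: ci_def cj_def split: if_splits)
next
  case False
  moreover have "\<not> (L \<subseteq># n' \<and> n = n' - L + K)"
    using False by auto
  ultimately show ?thesis
    by (simp only: if_not_P if_False mult_zero_right)
qed

lemma scaled_sum_pdelta_nths:
  assumes "M \<le> N" and "length iss = N" and "length jss = N"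
    and "length ks = M" and "length ls = M"
  shows "of_real (fact (N - M) / fact N * (fact M)^2) *
      (\<Sum>A\<in>{A. A \<subseteq> {..<N} \<and> card A = M}. \<Sum>B\<in>{B. B \<subseteq> {..<N} \<and> card B = M}.
        pdelta ks (nths iss A) * pdelta ls (nths jss B) *
        pdelta (nths iss ({..<N} - A)) (nths jss ({..<N} - B))) =
    (if mset ls \<subseteq># mset jss \<and> mset iss = mset jss - mset ls + mset ks
     then of_real (real (mset_fact (mset iss)) * real (mset_fact (mset jss)) /
       (real (mset_fact (mset jss - mset ls)) * fact N))
     else 0)"
  unfolding sum_pdelta_nths[OF assms] of_real_mult[symmetric] scaled_subseq_count_product
  by (simp only: if_distrib[of of_real] of_real_0)

theorem lemma2:
  fixes iss jss ks ls :: "'a list" and M N :: nat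
  assumes "1 \<le> M" and "M \<le> N"
    and "length iss = N" and "length jss = N" and "length ks = M" and "length ls = M"
  shows "fock_inner (sym_state iss) (foldr create ks (foldr annih ls (sym_state jss)))
    = complex_of_real (fact (N - M) / fact N * (fact M)^2) *
      (\<Sum>A\<in>{A. A \<subseteq> {..<N} \<and> card A = M}. \<Sum>B\<in>{B. B \<subseteq> {..<N} \<and> card B = M}.
         pdelta ks (nths iss A) * pdelta ls (nths jss B) *
         pdelta (nths iss ({..<N} - A)) (nths jss ({..<N} - B)))"
  unfolding fock_inner_sym_state_creates_annihs[OF assms(3,4)] scaled_sum_pdelta_nths[OF assms(2-6)] ..

end
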